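(* There exists an absolute constant $C>0$ such that the following holds. Let $\mathcal J$ be a joint distribution of $(p_1,p_2,y)\in[0,1]\times[0,1]\times\{0,1\}$, let $\mathcal D_1$ be the distribution of $(p_1,y)$ and $\mathcal D_2$ the distribution of $(p_2,y)$. Then for every positive integer $m$, $$|\mathsf{SCDL}_m(\mathcal D_1)-\mathsf{SCDL}_m(\mathcal D_2)|\le C\,m\,\mathbb E_{\mathcal J}|p_1-p_2|.$$
   Context: For $x\in\mathbb R$ write $x_+=\max\{x,0\}$. For a distribution $\mathcal D$ of $(p,y)\in[0,1]\times\{0,1\}$, a positive integer $m$ and $i\in\{0,\ldots,m\}$, let $w_i(p)=(1-|mp-i|)_+$, $\pi_i=\mathbb E_{\mathcal D}[w_i(p)]$ and $q_i=\mathbb E_{\mathcal D}[w_i(p)y]/\pi_i$ (terms with $\pi_i=0$ are $0$). Define $$\mathsf{SCDL}_m(\mathcal D)=\max_{i=0,\ldots,m}\Big(\sum_{j=0}^{i}\pi_j\big(q_j-\tfrac{i+1}{m}\big)_+ +\sum_{j=i+1}^{m}\pi_j\big(\tfrac im-q_j\big)_+\Big).$$ *)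

theory Defs
  imports "HOL-Probability.Probability"
begin

definition py_space :: "(real \<times> bool) measure" where
  "py_space = borel \<Otimes>\<^sub>M count_space UNIV"

definition ppy_space :: "(real \<times> real \<times> bool) measure" where
  "ppy_space = borel \<Otimes>\<^sub>M (borel \<Otimes>\<^sub>M count_space UNIV)"

definition pos_part :: "real \<Rightarrow> real" where
  "pos_part x = max x 0"

definition wgt :: "nat \<Rightarrow> nat \<Rightarrow> real \<Rightarrow> real" where
  "wgt m i p = pos_part (1 - \<bar>real m * p - real i\<bar>)"

definition pi_w :: "(real \<times> bool) measure \<Rightarrow> nat \<Rightarrow> nat \<Rightarrow> real" where
  "pi_w D m i = (\<integral>z. wgt m i (fst z) \<partial>D)"

definition q_w :: "(real \<times> bool) measure \<Rightarrow> nat \<Rightarrow> nat \<Rightarrow> real" where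
  "q_w D m i = (if pi_w D m i = 0 then 0
     else (\<integral>z. wgt m i (fst z) * (if snd z then 1 else 0) \<partial>D) / pi_w D m i)"

definition SCDL :: "nat \<Rightarrow> (real \<times> bool) measure \<Rightarrow> real" where
  "SCDL m D = Max ((\<lambda>i.
      (\<Sum>j\<in>{0..i}. pi_w D m j * pos_part (q_w D m j - real (i + 1) / real m))
    + (\<Sum>j\<in>{i+1..m}. pi_w D m j * pos_part (real i / real m - q_w D m j))) ` {0..m})"

end

theory Submission
  imports Defs
begin

text \<open>Write \<open>a\<^sub>j = \<pi>\<^sub>j q\<^sub>j = E[w\<^sub>j(p) y]\<close>. Each summand \<open>\<pi>\<^sub>j (q\<^sub>j - c)\<^sub>+\<close> of
  \<open>SCDL\<^sub>m\<close> equals \<open>(a\<^sub>j - c \<pi>\<^sub>j)\<^sub>+\<close>, and the thresholds \<open>c\<close> are at most 2, so every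
  term of the maximum is 2-Lipschitz in the vectors \<open>(\<pi>\<^sub>j)\<close> and \<open>(a\<^sub>j)\<close> for the
  \<open>\<ell>\<^sub>1\<close> norm. Under the coupling \<open>J\<close>, both \<open>|\<pi>\<^sub>j(D\<^sub>1) - \<pi>\<^sub>j(D\<^sub>2)|\<close> and
  \<open>|a\<^sub>j(D\<^sub>1) - a\<^sub>j(D\<^sub>2)|\<close> are at most \<open>E|w\<^sub>j(p\<^sub>1) - w\<^sub>j(p\<^sub>2)|\<close>. Each \<open>w\<^sub>j\<close> is
  \<open>m\<close>-Lipschitz and at most four of them are nonzero at \<open>p\<^sub>1\<close> or \<open>p\<^sub>2\<close>, so
  \<open>\<Sum>\<^sub>j |w\<^sub>j(p\<^sub>1) - w\<^sub>j(p\<^sub>2)| \<le> 4m|p\<^sub>1 - p\<^sub>2|\<close>. Altogether \<open>C = 16\<close> works.\<close>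

lemma pos_part_diff_abs_le: "\<bar>pos_part x - pos_part y\<bar> \<le> \<bar>x - y\<bar>"
  unfolding pos_part_def by linarith

lemma pos_part_affine_diff_le:
  fixes c x1 x2 y1 y2 :: real
  assumes "\<bar>c\<bar> \<le> 2"
  shows "\<bar>pos_part (x1 + c * y1) - pos_part (x2 + c * y2)\<bar> \<le> 2 * (\<bar>y1 - y2\<bar> + \<bar>x1 - x2\<bar>)"
proof -
  have "\<bar>pos_part (x1 + c * y1) - pos_part (x2 + c * y2)\<bar> \<le> \<bar>(x1 - x2) + c * (y1 - y2)\<bar>"
    using pos_part_diff_abs_le by (simp add: algebra_simps)
  also have "\<dots> \<le> \<bar>x1 - x2\<bar> + \<bar>c\<bar> * \<bar>y1 - y2\<bar>"
    by (metis abs_mult abs_triangle_ineq)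
  also have "\<dots> \<le> 2 * (\<bar>y1 - y2\<bar> + \<bar>x1 - x2\<bar>)"
    using mult_right_mono[OF assms abs_ge_zero[of "y1 - y2"]] abs_ge_zero[of "x1 - x2"]
    by argo
  finally show ?thesis .
qed

lemma mult_pos_part_ratio_minus:
  fixes a p c :: real
  assumes "0 \<le> a" "a \<le> p"
  shows "p * pos_part ((if p = 0 then 0 else a / p) - c) = pos_part (a - c * p)"
  using assms by (cases "p = 0") (auto simp: pos_part_def max_def field_simps)

lemma mult_pos_part_minus_ratio:
  fixes a p c :: real
  assumes "0 \<le> a" "a \<le> p"
  shows "p * pos_part (c - (if p = 0 then 0 else a / p)) = pos_part (c * p - a)"
  using assms by (cases "p = 0") (auto simp: pos_part_def max_def field_simps)

lemma Max_image_diff_le: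
  fixes f g :: "'a \<Rightarrow> real"
  assumes "finite S" "S \<noteq> {}" "\<And>i. i \<in> S \<Longrightarrow> \<bar>f i - g i\<bar> \<le> B"
  shows "\<bar>Max (f ` S) - Max (g ` S)\<bar> \<le> B"
proof -
  have "Max (f ` S) \<le> Max (g ` S) + B" if "\<And>i. i \<in> S \<Longrightarrow> \<bar>f i - g i\<bar> \<le> B"
    for f g :: "'a \<Rightarrow> real"
  proof -
    have "Max (f ` S) \<in> f ` S" using assms(1,2) by (intro Max_in) auto
    then obtain i where "i \<in> S" "Max (f ` S) = f i" by auto
    moreover have "g i \<le> Max (g ` S)" using \<open>i \<in> S\<close> assms(1) by simp
    ultimately show ?thesis using that[of i] by linarith
  qed
  from this[of f g] this[of g f] show ?thesis
    using assms(3) by (force simp: abs_minus_commute)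
qed

lemma integral_diff_abs_le:
  fixes f g h :: "'a \<Rightarrow> real"
  assumes "integrable M f" "integrable M g" "integrable M h" "\<And>z. \<bar>f z - g z\<bar> \<le> h z"
  shows "\<bar>integral\<^sup>L M f - integral\<^sup>L M g\<bar> \<le> integral\<^sup>L M h"
proof -
  have "\<bar>integral\<^sup>L M f - integral\<^sup>L M g\<bar> = \<bar>\<integral>z. f z - g z \<partial>M\<bar>"
    using assms by simp
  also have "\<dots> \<le> (\<integral>z. \<bar>f z - g z\<bar> \<partial>M)" by (rule integral_abs_bound)
  also have "\<dots> \<le> integral\<^sup>L M h" using assms by (intro integral_mono) auto
  finally show ?thesis .
qed

lemma wgt_nonneg: "0 \<le> wgt m j x"
  unfolding wgt_def pos_part_def by simp

lemma wgt_le_1: "wgt m j x \<le> 1"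
  unfolding wgt_def pos_part_def by simp

lemma wgt_measurable [measurable]: "wgt m j \<in> borel_measurable borel"
  unfolding wgt_def pos_part_def by measurable

lemma wgt_diff_abs_le: "\<bar>wgt m j x - wgt m j x'\<bar> \<le> real m * \<bar>x - x'\<bar>"
proof -
  have "\<bar>wgt m j x - wgt m j x'\<bar> \<le> \<bar>(1 - \<bar>real m * x - real j\<bar>) - (1 - \<bar>real m * x' - real j\<bar>)\<bar>"
    unfolding wgt_def by (rule pos_part_diff_abs_le)
  also have "\<dots> \<le> \<bar>real m * x - real m * x'\<bar>" by linarith
  also have "\<dots> = real m * \<bar>x - x'\<bar>" by (simp add: abs_mult right_diff_distrib[symmetric])
  finally show ?thesis .
qed

lemma wgt_eq_0:
  assumes "int j \<noteq> \<lfloor>real m * x\<rfloor>" "int j \<noteq> \<lfloor>real m * x\<rfloor> + 1"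
  shows "wgt m j x = 0"
proof -
  have "\<not> \<bar>real m * x - real j\<bar> < 1" using assms by linarith
  then show ?thesis unfolding wgt_def pos_part_def by simp
qed

lemma sum_wgt_diff_abs_le:
  "(\<Sum>j\<in>{0..n}. \<bar>wgt m j x - wgt m j x'\<bar>) \<le> 4 * real m * \<bar>x - x'\<bar>"
proof -
  define S where "S = nat ` {\<lfloor>real m * x\<rfloor>, \<lfloor>real m * x\<rfloor> + 1, \<lfloor>real m * x'\<rfloor>, \<lfloor>real m * x'\<rfloor> + 1}"
  have "card ({0..n} \<inter> S) \<le> card S" by (simp add: S_def card_mono)
  also have "\<dots> \<le> 4" unfolding S_def
    by (rule order.trans[OF card_image_le]) (auto simp: card_insert_if)
  finally have "card ({0..n} \<inter> S) \<le> 4" .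
  have "wgt m j x - wgt m j x' = 0" if "j \<notin> S" for j
    using that wgt_eq_0[of j m x] wgt_eq_0[of j m x'] unfolding S_def by force
  then have "(\<Sum>j\<in>{0..n}. \<bar>wgt m j x - wgt m j x'\<bar>) = (\<Sum>j\<in>{0..n} \<inter> S. \<bar>wgt m j x - wgt m j x'\<bar>)"
    by (intro sum.mono_neutral_right) auto
  also have "\<dots> \<le> (\<Sum>j\<in>{0..n} \<inter> S. real m * \<bar>x - x'\<bar>)"
    by (intro sum_mono wgt_diff_abs_le)
  also have "\<dots> \<le> 4 * (real m * \<bar>x - x'\<bar>)"
    using \<open>card ({0..n} \<inter> S) \<le> 4\<close> by (simp add: mult_right_mono)
  finally show ?thesis by simp
qed

text \<open>The \<open>i\<close>-th term of \<open>SCDL\<^sub>m\<close> with \<open>\<pi>\<^sub>j\<close> and \<open>\<pi>\<^sub>j q\<^sub>j\<close> as the free arguments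
  \<open>P j\<close> and \<open>A j\<close>.\<close>
definition scdl_term :: "nat \<Rightarrow> (nat \<Rightarrow> real) \<Rightarrow> (nat \<Rightarrow> real) \<Rightarrow> nat \<Rightarrow> real" where
  "scdl_term m P A i = (\<Sum>j\<in>{0..i}. pos_part (A j - real (i + 1) / real m * P j))
    + (\<Sum>j\<in>{i+1..m}. pos_part (real i / real m * P j - A j))"

lemma scdl_term_diff_le:
  assumes "i \<le> m"
  shows "\<bar>scdl_term m P1 A1 i - scdl_term m P2 A2 i\<bar>
    \<le> (\<Sum>j\<in>{0..m}. 2 * (\<bar>P1 j - P2 j\<bar> + \<bar>A1 j - A2 j\<bar>))"
proof -
  let ?B = "\<lambda>j. 2 * (\<bar>P1 j - P2 j\<bar> + \<bar>A1 j - A2 j\<bar>)"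
  \<comment> \<open>for \<open>m = 0\<close> both thresholds are \<open>0\<close>, since \<open>x / 0 = 0\<close>\<close>
  have thresholds: "real (i + 1) / real m \<le> 2" "real i / real m \<le> 2"
    using assms by (cases "m = 0"; simp add: field_simps)+
  have "\<bar>(\<Sum>j\<in>{0..i}. pos_part (A1 j - real (i + 1) / real m * P1 j))
      - (\<Sum>j\<in>{0..i}. pos_part (A2 j - real (i + 1) / real m * P2 j))\<bar> \<le> (\<Sum>j\<in>{0..i}. ?B j)"
    unfolding sum_subtractf[symmetric]
    using pos_part_affine_diff_le[of "- (real (i + 1) / real m)"] thresholds
    by (intro order.trans[OF sum_abs sum_mono]) simp
  moreover have "\<bar>(\<Sum>j\<in>{i+1..m}. pos_part (real i / real m * P1 j - A1 j))
      - (\<Sum>j\<in>{i+1..m}. pos_part (real i / real m * P2 j - A2 j))\<bar> \<le> (\<Sum>j\<in>{i+1..m}. ?B j)"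
    unfolding sum_subtractf[symmetric]
    using pos_part_affine_diff_le[of "real i / real m" "- A1 _" _ "- A2 _"] thresholds
    by (intro order.trans[OF sum_abs sum_mono]) (simp add: abs_minus_commute)
  moreover have "{0..m} = {0..i} \<union> {i+1..m}" using assms by auto
  then have "(\<Sum>j\<in>{0..m}. ?B j) = (\<Sum>j\<in>{0..i}. ?B j) + (\<Sum>j\<in>{i+1..m}. ?B j)"
    by (simp add: sum.union_disjoint)
  ultimately show ?thesis unfolding scdl_term_def by linarith
qed

lemma measurable_py_space [measurable]:
  "fst \<in> py_space \<rightarrow>\<^sub>M borel" "snd \<in> py_space \<rightarrow>\<^sub>M count_space UNIV"
  unfolding py_space_def by measurable

definition pi_q_w :: "(real \<times> bool) measure \<Rightarrow> nat \<Rightarrow> nat \<Rightarrow> real" where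
  "pi_q_w D m i = (\<integral>z. wgt m i (fst z) * (if snd z then 1 else 0) \<partial>D)"

lemma
  assumes "finite_measure D" "sets D = sets py_space"
  shows pi_q_w_nonneg: "0 \<le> pi_q_w D m j"
    and pi_q_w_le_pi_w: "pi_q_w D m j \<le> pi_w D m j"
proof -
  interpret finite_measure D by fact
  have "(\<lambda>z. wgt m j (fst z)) \<in> borel_measurable D"
    unfolding measurable_cong_sets[OF assms(2) refl] by measurable
  then have "integrable D (\<lambda>z. wgt m j (fst z))"
    by (intro integrable_const_bound[of _ 1]) (auto simp: wgt_nonneg wgt_le_1)
  then show "0 \<le> pi_q_w D m j" "pi_q_w D m j \<le> pi_w D m j"
    unfolding pi_q_w_def pi_w_def
    by (auto intro!: integral_nonneg_AE integral_mono_AE' simp: wgt_nonneg)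
qed

lemma SCDL_eq_Max_scdl_term:
  assumes "finite_measure D" "sets D = sets py_space"
  shows "SCDL m D = Max (scdl_term m (pi_w D m) (pi_q_w D m) ` {0..m})"
proof -
  have "q_w D m j = (if pi_w D m j = 0 then 0 else pi_q_w D m j / pi_w D m j)" for j
    unfolding q_w_def pi_q_w_def by simp
  then show ?thesis
    unfolding SCDL_def scdl_term_def
    using mult_pos_part_ratio_minus mult_pos_part_minus_ratio
      pi_q_w_nonneg[OF assms] pi_q_w_le_pi_w[OF assms]
    by simp
qed

lemma pi_w_distr:
  assumes "g \<in> M \<rightarrow>\<^sub>M py_space"
  shows "pi_w (distr M py_space g) m j = (\<integral>z. wgt m j (fst (g z)) \<partial>M)"
  unfolding pi_w_def using assms by (simp add: integral_distr)

lemma pi_q_w_distr: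
  assumes "g \<in> M \<rightarrow>\<^sub>M py_space"
  shows "pi_q_w (distr M py_space g) m j
    = (\<integral>z. wgt m j (fst (g z)) * (if snd (g z) then 1 else 0) \<partial>M)"
  unfolding pi_q_w_def using assms by (simp add: integral_distr)

lemma
  assumes "finite_measure M" "g \<in> M \<rightarrow>\<^sub>M py_space"
  shows integrable_wgt_comp: "integrable M (\<lambda>z. wgt m j (fst (g z)))"
    and integrable_wgt_label_comp:
      "integrable M (\<lambda>z. wgt m j (fst (g z)) * (if snd (g z) then 1 else 0))"
  using assms
  by (auto intro!: finite_measure.integrable_const_bound[of M _ 1] simp: wgt_nonneg wgt_le_1)

lemma pi_w_distr_diff_le:
  assumes "finite_measure M" "g1 \<in> M \<rightarrow>\<^sub>M py_space" "g2 \<in> M \<rightarrow>\<^sub>M py_space"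
  shows "\<bar>pi_w (distr M py_space g1) m j - pi_w (distr M py_space g2) m j\<bar>
    \<le> (\<integral>z. \<bar>wgt m j (fst (g1 z)) - wgt m j (fst (g2 z))\<bar> \<partial>M)"
  unfolding pi_w_distr[OF assms(2)] pi_w_distr[OF assms(3)]
  using integrable_wgt_comp[OF assms(1)] assms(2,3) by (intro integral_diff_abs_le) auto

lemma pi_q_w_distr_diff_le:
  assumes "finite_measure M" "g1 \<in> M \<rightarrow>\<^sub>M py_space" "g2 \<in> M \<rightarrow>\<^sub>M py_space"
    and "\<And>z. snd (g1 z) = snd (g2 z)"
  shows "\<bar>pi_q_w (distr M py_space g1) m j - pi_q_w (distr M py_space g2) m j\<bar>
    \<le> (\<integral>z. \<bar>wgt m j (fst (g1 z)) - wgt m j (fst (g2 z))\<bar> \<partial>M)"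
  unfolding pi_q_w_distr[OF assms(2)] pi_q_w_distr[OF assms(3)]
  using integrable_wgt_comp[OF assms(1)] assms(2-4)
    integrable_wgt_label_comp[OF assms(1,2)] integrable_wgt_label_comp[OF assms(1,3)]
  by (intro integral_diff_abs_le) (auto simp: abs_mult left_diff_distrib[symmetric])

lemma SCDL_distr_diff_le:
  assumes "finite_measure M"
    and g1: "g1 \<in> M \<rightarrow>\<^sub>M py_space" and g2: "g2 \<in> M \<rightarrow>\<^sub>M py_space"
    and same_label: "\<And>z. snd (g1 z) = snd (g2 z)"
    and dist_int: "integrable M (\<lambda>z. \<bar>fst (g1 z) - fst (g2 z)\<bar>)"
  shows "\<bar>SCDL m (distr M py_space g1) - SCDL m (distr M py_space g2)\<bar>
    \<le> 16 * real m * (\<integral>z. \<bar>fst (g1 z) - fst (g2 z)\<bar> \<partial>M)"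
proof -
  define D1 where "D1 = distr M py_space g1"
  define D2 where "D2 = distr M py_space g2"
  let ?E = "\<lambda>j z. \<bar>wgt m j (fst (g1 z)) - wgt m j (fst (g2 z))\<bar>"
  have D1: "finite_measure D1" "sets D1 = sets py_space"
    and D2: "finite_measure D2" "sets D2 = sets py_space"
    unfolding D1_def D2_def using finite_measure.finite_measure_distr[OF assms(1)] g1 g2 by simp_all
  have "\<bar>SCDL m D1 - SCDL m D2\<bar>
      \<le> (\<Sum>j\<in>{0..m}. 2 * (\<bar>pi_w D1 m j - pi_w D2 m j\<bar> + \<bar>pi_q_w D1 m j - pi_q_w D2 m j\<bar>))"
    unfolding SCDL_eq_Max_scdl_term[OF D1] SCDL_eq_Max_scdl_term[OF D2]
    by (intro Max_image_diff_le scdl_term_diff_le) auto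
  also have "\<dots> \<le> (\<Sum>j\<in>{0..m}. 2 * ((\<integral>z. ?E j z \<partial>M) + (\<integral>z. ?E j z \<partial>M)))"
    unfolding D1_def D2_def
    by (intro sum_mono mult_left_mono add_mono pi_w_distr_diff_le pi_q_w_distr_diff_le assms) auto
  also have "\<dots> = 4 * (\<integral>z. (\<Sum>j\<in>{0..m}. ?E j z) \<partial>M)"
    using integrable_wgt_comp[OF assms(1)] g1 g2 by (simp add: sum_distrib_left)
  also have "\<dots> \<le> 4 * (\<integral>z. 4 * real m * \<bar>fst (g1 z) - fst (g2 z)\<bar> \<partial>M)"
    using integrable_wgt_comp[OF assms(1)] g1 g2 dist_int sum_wgt_diff_abs_le
    by (intro mult_left_mono integral_mono) auto
  also have "\<dots> = 16 * real m * (\<integral>z. \<bar>fst (g1 z) - fst (g2 z)\<bar> \<partial>M)"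
    by simp
  finally show ?thesis unfolding D1_def D2_def .
qed

theorem lemma5p2:
  shows "\<exists>C::real. C > 0 \<and>
    (\<forall>(J :: (real \<times> real \<times> bool) measure) (m :: nat).
       prob_space J \<longrightarrow> sets J = sets ppy_space \<longrightarrow>
       (AE z in J. fst z \<in> {0..1} \<and> fst (snd z) \<in> {0..1}) \<longrightarrow>
       m > 0 \<longrightarrow>
       \<bar>SCDL m (distr J py_space (\<lambda>(p1, p2, y). (p1, y)))
          - SCDL m (distr J py_space (\<lambda>(p1, p2, y). (p2, y)))\<bar>
         \<le> C * real m * (\<integral>z. \<bar>fst z - fst (snd z)\<bar> \<partial>J))"
proof (intro exI[of _ 16] conjI allI impI)
  fix J :: "(real \<times> real \<times> bool) measure" and m :: nat
  assume "prob_space J" and sets_J: "sets J = sets ppy_space"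
    and unit_interval: "AE z in J. fst z \<in> {0..1} \<and> fst (snd z) \<in> {0..1}"
  interpret prob_space J by fact
  have meas_J: "J \<rightarrow>\<^sub>M N = ppy_space \<rightarrow>\<^sub>M N" for N :: "'b measure"
    using sets_J by (rule measurable_cong_sets) simp
  have "AE z in J. norm \<bar>fst z - fst (snd z)\<bar> \<le> 1"
    using unit_interval by (rule eventually_mono) auto
  moreover have "(\<lambda>z. \<bar>fst z - fst (snd z)\<bar>) \<in> borel_measurable J"
    unfolding meas_J ppy_space_def by measurable
  ultimately have "integrable J (\<lambda>z. \<bar>fst z - fst (snd z)\<bar>)"
    by (rule integrable_const_bound)
  moreover have "(\<lambda>(p1, p2, y). (p1, y)) \<in> J \<rightarrow>\<^sub>M py_space"
    unfolding meas_J ppy_space_def py_space_def by measurable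
  moreover have "(\<lambda>(p1, p2, y). (p2, y)) \<in> J \<rightarrow>\<^sub>M py_space"
    unfolding meas_J ppy_space_def py_space_def by measurable
  ultimately show "\<bar>SCDL m (distr J py_space (\<lambda>(p1, p2, y). (p1, y)))
      - SCDL m (distr J py_space (\<lambda>(p1, p2, y). (p2, y)))\<bar>
    \<le> 16 * real m * (\<integral>z. \<bar>fst z - fst (snd z)\<bar> \<partial>J)"
    using SCDL_distr_diff_le[of J "\<lambda>(p1, p2, y). (p1, y)" "\<lambda>(p1, p2, y). (p2, y)" m]
    by (simp add: split_beta)
qed simp

end
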